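(* Let $f\colon\mathbb{R}^d\to\mathbb{R}\cup\{\infty\}$ be a lower semicontinuous convex function, let $Q\subseteq\mathbb{R}^d$ be a nonempty closed convex set contained in the domain of $f$, and assume the set $X^*$ of minimizers of $f$ over $Q$ is nonempty, with minimum value $f^*$. Let $g(x;\xi)$ be a stochastic subgradient oracle, i.e. $\mathbb{E}_{\xi\sim D}\,g(x;\xi)\in\partial f(x)$ for all $x\in Q$, and suppose there are constants $L_0,L_1\ge 0$ with $$\mathbb{E}_{\xi}\|g(x;\xi)\|^2\le L_0^2+L_1(f(x)-f^* )\qquad\text{for all }x\in Q.$$ Fix $x^*\in X^*$, $x_0\in Q$, and consider the iteration $x_{k+1}=P_Q(x_k-\alpha_k g(x_k;\xi_k))$ with $\xi_k\sim D$ i.i.d. Then for any positive sequence $(\alpha_k)$ with $L_1\alpha_k<2$ for all $k$, and any $T\ge 0$, $$\mathbb{E}_{\xi_{0\dots T}}\left[f\left(\frac{\sum_{k=0}^T\alpha_k(2-L_1\alpha_k)x_k}{\sum_{k=0}^T\alpha_k(2-L_1\alpha_k)}\right)-f^*\right]\le\frac{\|x_0-x^*\|^2+L_0^2\sum_{k=0}^T\alpha_k^2}{\sum_{k=0}^T\alpha_k(2-L_1\alpha_k)}.$$ In particular, if $L_0>0$ and the constant step size $\alpha_k=\|x_0-x^*\|/(L_0\sqrt{T+1})$ satisfies $L_1\alpha_k<2$, then $$\mathbb{E}_{\xi_{0\dots T}}\left[f\left(\frac{1}{T+1}\sum_{k=0}^Tx_k\right)-f^*\right]\le\frac{L_0\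|x_0-x^*\|}{\sqrt{T+1}}\cdot\frac{2}{2-L_1\alpha_k}.$$
   Context: $P_Q$ denotes orthogonal projection onto $Q$; $\partial f(x)=\{g: f(y)\ge f(x)+g^T(y-x)\ \forall y\in\mathbb{R}^d\}$. $D$ is a distribution from which the samples $\xi_k$ are drawn independently; $\mathbb{E}_{\xi_{0\dots T}}$ denotes expectation over $\xi_0,\dots,\xi_T$. *)

theory Defs
  imports "HOL-Analysis.Analysis" "HOL-Probability.Probability"
begin

definition lsc_ereal :: "('a::topological_space \<Rightarrow> ereal) \<Rightarrow> bool" where
  "lsc_ereal f \<longleftrightarrow> (\<forall>x. f x \<le> Liminf (at x) f)"

definition convex_ereal :: "('a::real_vector \<Rightarrow> ereal) \<Rightarrow> bool" where
  "convex_ereal f \<longleftrightarrow>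
     (\<forall>x y u. 0 < u \<and> u < 1 \<longrightarrow>
        f (u *\<^sub>R x + (1 - u) *\<^sub>R y) \<le> ereal u * f x + ereal (1 - u) * f y)"

definition edom :: "('a \<Rightarrow> ereal) \<Rightarrow> 'a set" where
  "edom f = {x. f x < \<infinity>}"

definition subdiff :: "('a::real_inner \<Rightarrow> ereal) \<Rightarrow> 'a \<Rightarrow> 'a set" where
  "subdiff f x = {g. \<forall>y. f y \<ge> f x + ereal (g \<bullet> (y - x))}"

fun sgd_iter :: "'a::euclidean_space set \<Rightarrow> ('a \<Rightarrow> 'b \<Rightarrow> 'a) \<Rightarrow> (nat \<Rightarrow> real) \<Rightarrow> 'a
                  \<Rightarrow> (nat \<Rightarrow> 'b) \<Rightarrow> nat \<Rightarrow> 'a" where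
  "sgd_iter Q g \<alpha> x0 \<xi> 0 = x0"
| "sgd_iter Q g \<alpha> x0 \<xi> (Suc k) =
     closest_point Q (sgd_iter Q g \<alpha> x0 \<xi> k - \<alpha> k *\<^sub>R g (sgd_iter Q g \<alpha> x0 \<xi> k) (\<xi> k))"

end

theory Submission
  imports Defs
begin

text \<open>Since the projection onto Q is nonexpansive and x* lies in Q, expanding
  |x_k - a_k g(x_k) - x*|^2, averaging over the fresh sample and using the subgradient
  inequality together with the growth bound gives
  E|x_(k+1) - x*|^2 + a_k (2 - L1 a_k) E(f(x_k) - f*) \<le> E|x_k - x*|^2 + a_k^2 L0^2.
  Summing over k telescopes, and Jensen's inequality for f at the weighted average of the
  iterates bounds the left-hand side from below. A constant step size makes all weights equal.\<close>

lemma sgd_iter_cong: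
  "(\<And>j. j < k \<Longrightarrow> \<xi> j = \<xi>' j) \<Longrightarrow> sgd_iter Q g \<alpha> x0 \<xi> k = sgd_iter Q g \<alpha> x0 \<xi>' k"
  by (induction k) auto

lemma sgd_iter_in_set:
  assumes "closed Q" "Q \<noteq> {}" "x0 \<in> Q"
  shows "sgd_iter Q g \<alpha> x0 \<xi> k \<in> Q"
  using assms by (cases k) (simp_all add: closest_point_in_set)

lemma sgd_iter_measurable:
  assumes Q: "closed Q" "convex Q" "Q \<noteq> {}"
    and g_meas: "(\<lambda>(x, \<xi>). g x \<xi>) \<in> borel_measurable (borel \<Otimes>\<^sub>M D)"
  shows "{..<k} \<subseteq> I \<Longrightarrow> (\<lambda>\<xi>. sgd_iter Q g \<alpha> x0 \<xi> k) \<in> borel_measurable (PiM I (\<lambda>_. D))"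
proof (induction k)
  case (Suc k)
  have [measurable]: "(\<lambda>\<xi>. sgd_iter Q g \<alpha> x0 \<xi> k) \<in> borel_measurable (PiM I (\<lambda>_. D))"
    using Suc.IH Suc.prems by (simp add: subset_eq)
  have [measurable]: "(\<lambda>\<xi>. \<xi> k) \<in> measurable (PiM I (\<lambda>_. D)) D"
    using Suc.prems by (intro measurable_component_singleton) auto
  have [measurable]: "closest_point Q \<in> borel_measurable borel"
    using continuous_on_closest_point[OF Q(2,1,3)] by (rule borel_measurable_continuous_onI)
  have "(\<lambda>\<xi>. g (sgd_iter Q g \<alpha> x0 \<xi> k) (\<xi> k)) \<in> borel_measurable (PiM I (\<lambda>_. D))"
    using measurable_compose[OF _ g_meas, of "\<lambda>\<xi>. (sgd_iter Q g \<alpha> x0 \<xi> k, \<xi> k)"] by simp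
  then show ?case by simp
qed simp

lemma norm_closest_point_diff_le:
  fixes Q :: "'a::euclidean_space set"
  assumes "closed Q" "convex Q" "z \<in> Q"
  shows "norm (closest_point Q y - z) \<le> norm (y - z)"
  using closest_point_lipschitz[OF assms(2,1), of y z] closest_point_self[OF assms(3)] assms(3)
  by (auto simp: dist_norm)

lemma sq_norm_step_expand:
  "(norm (x - a *\<^sub>R v - z))\<^sup>2 = (norm (x - z))\<^sup>2 - 2 * a * (v \<bullet> (x - z)) + a\<^sup>2 * (norm v)\<^sup>2"
  unfolding power2_norm_eq_inner
  by (simp add: inner_diff_left inner_diff_right inner_commute algebra_simps power2_eq_square)

lemma lsc_ereal_borel_measurable:
  fixes f :: "'a::euclidean_space \<Rightarrow> ereal"
  assumes "lsc_ereal f"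
  shows "f \<in> borel_measurable borel"
proof (rule borel_measurableI_greater)
  fix y
  have "eventually (\<lambda>z. y < f z) (nhds x)" if "y < f x" for x
  proof -
    have "y < Liminf (at x) f"
      using assms that unfolding lsc_ereal_def by (blast intro: less_le_trans)
    then show ?thesis
      using that less_LiminfD by (auto simp: eventually_nhds_conv_at)
  qed
  then have "open {x. y < f x}"
    by (subst open_subopen) (auto simp: eventually_nhds subset_eq)
  then show "{x \<in> space borel. y < f x} \<in> sets borel" by simp
qed

lemma convex_on_real_of_ereal:
  assumes f: "convex_ereal f" and S: "convex S" and fin: "\<And>x. x \<in> S \<Longrightarrow> \<bar>f x\<bar> \<noteq> \<infinity>"
  shows "convex_on S (\<lambda>x. real_of_ereal (f x))"
  unfolding convex_on_def
proof (intro conjI S ballI allI impI)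
  fix x y and u v :: real assume xy: "x \<in> S" "y \<in> S" and uv: "0 \<le> u" "0 \<le> v" "u + v = 1"
  show "real_of_ereal (f (u *\<^sub>R x + v *\<^sub>R y))
        \<le> u * real_of_ereal (f x) + v * real_of_ereal (f y)"
  proof (cases "u = 0 \<or> v = 0")
    case False
    then have u: "0 < u" "u < 1" and v: "v = 1 - u" using uv by auto
    have "u *\<^sub>R x + v *\<^sub>R y \<in> S" using S xy uv by (simp add: convex_def)
    moreover note fin[OF this]
    moreover have "f (u *\<^sub>R x + v *\<^sub>R y) \<le> ereal u * f x + ereal v * f y"
      using f u unfolding convex_ereal_def v by blast
    ultimately show ?thesis
      using fin[OF xy(1)] fin[OF xy(2)]
      by (cases "f x"; cases "f y"; cases "f (u *\<^sub>R x + v *\<^sub>R y)") auto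
  qed (use uv in auto)
qed

lemma telescoping_sum_le:
  fixes V F e :: "nat \<Rightarrow> 'a::ordered_comm_monoid_add"
  assumes "\<And>k. k < n \<Longrightarrow> V (Suc k) + F k \<le> V k + e k"
  shows "V n + (\<Sum>k<n. F k) \<le> V 0 + (\<Sum>k<n. e k)"
  using assms
proof (induction n)
  case (Suc n)
  have "V (Suc n) + (\<Sum>k<Suc n. F k) = (V (Suc n) + F n) + (\<Sum>k<n. F k)"
    by (simp add: ac_simps)
  also have "\<dots> \<le> (V n + e n) + (\<Sum>k<n. F k)"
    using Suc.prems[of n] by (simp add: add_right_mono)
  also have "\<dots> = (V n + (\<Sum>k<n. F k)) + e n"
    by (simp add: ac_simps)
  also have "\<dots> \<le> (V 0 + (\<Sum>k<n. e k)) + e n"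
    using Suc by (simp add: add_right_mono)
  also have "\<dots> = V 0 + (\<Sum>k<Suc n. e k)"
    by (simp add: ac_simps)
  finally show ?case .
qed simp

locale stochastic_subgradient_setting =
  fixes f :: "'a::euclidean_space \<Rightarrow> ereal"
    and Q :: "'a set"
    and D :: "'b measure"
    and g :: "'a \<Rightarrow> 'b \<Rightarrow> 'a"
    and L0 L1 fstar :: real
    and xstar x0 :: 'a
  assumes proper: "\<forall>x. f x \<noteq> -\<infinity>"
    and lsc: "lsc_ereal f"
    and cvx: "convex_ereal f"
    and Q_closed: "closed Q" and Q_convex: "convex Q"
    and Q_dom: "Q \<subseteq> edom f"
    and xstar_Q: "xstar \<in> Q"
    and xstar_min: "\<forall>y\<in>Q. f xstar \<le> f y"
    and fstar: "f xstar = ereal fstar"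
    and x0_Q: "x0 \<in> Q"
    and D_prob: "prob_space D"
    and g_meas: "(\<lambda>(x, \<xi>). g x \<xi>) \<in> borel_measurable (borel \<Otimes>\<^sub>M D)"
    and g_int: "\<forall>x\<in>Q. integrable D (g x)"
    and g_subgrad: "\<forall>x\<in>Q. (\<integral>\<xi>. g x \<xi> \<partial>D) \<in> subdiff f x"
    and L1_nn: "L1 \<ge> 0"
    and g_growth: "\<forall>x\<in>Q. (\<integral>\<^sup>+\<xi>. ennreal ((norm (g x \<xi>))\<^sup>2) \<partial>D)
                         \<le> ennreal (L0\<^sup>2 + L1 * (real_of_ereal (f x) - fstar))"
begin

sublocale D: prob_space D
  by (rule D_prob)

definition f_real :: "'a \<Rightarrow> real" where
  "f_real x = real_of_ereal (f x)"

lemma Q_nonempty: "Q \<noteq> {}"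
  using xstar_Q by blast

lemma f_finite: "x \<in> Q \<Longrightarrow> \<bar>f x\<bar> \<noteq> \<infinity>"
  using Q_dom proper unfolding edom_def by (cases "f x") auto

lemma f_eq_f_real: "x \<in> Q \<Longrightarrow> f x = ereal (f_real x)"
  using f_finite by (simp add: f_real_def ereal_real')

lemma fstar_le_f_real: "x \<in> Q \<Longrightarrow> fstar \<le> f_real x"
  using xstar_min f_eq_f_real fstar by fastforce

lemma f_real_borel_measurable [measurable]: "f_real \<in> borel_measurable borel"
  unfolding f_real_def[abs_def]
  using lsc_ereal_borel_measurable[OF lsc] by measurable

lemma f_real_convex: "convex_on Q f_real"
  unfolding f_real_def[abs_def] by (rule convex_on_real_of_ereal[OF cvx Q_convex f_finite])

lemma sgd_iter_in_Q: "sgd_iter Q g \<alpha> x0 \<xi> k \<in> Q"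
  by (rule sgd_iter_in_set[OF Q_closed Q_nonempty x0_Q])

lemma sgd_iter_measurable_PiM [measurable]:
  "k \<le> T \<Longrightarrow> (\<lambda>\<xi>. sgd_iter Q g \<alpha> x0 \<xi> k) \<in> borel_measurable (PiM {..T} (\<lambda>_. D))"
  by (rule sgd_iter_measurable[OF Q_closed Q_convex Q_nonempty g_meas]) auto

lemma g_borel_measurable [measurable]: "g x \<in> borel_measurable D"
  using measurable_compose[OF measurable_Pair1'[of x borel D] g_meas] by simp

lemma sq_norm_g_integrable:
  assumes "x \<in> Q"
  shows "integrable D (\<lambda>\<xi>. (norm (g x \<xi>))\<^sup>2)"
  using g_growth assms
  by (intro integrableI_bounded) (auto simp: top.not_eq_extremum intro: le_less_trans)

lemma expected_sq_norm_g_le: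
  assumes x: "x \<in> Q"
  shows "(\<integral>\<xi>. (norm (g x \<xi>))\<^sup>2 \<partial>D) \<le> L0\<^sup>2 + L1 * (f_real x - fstar)"
proof -
  have "ennreal (\<integral>\<xi>. (norm (g x \<xi>))\<^sup>2 \<partial>D) \<le> ennreal (L0\<^sup>2 + L1 * (f_real x - fstar))"
    using g_growth x
    by (subst nn_integral_eq_integral[OF sq_norm_g_integrable[OF x], symmetric])
       (auto simp: f_real_def)
  moreover have "0 \<le> L0\<^sup>2 + L1 * (f_real x - fstar)"
    using fstar_le_f_real[OF x] L1_nn by simp
  ultimately show ?thesis
    by (simp add: ennreal_le_iff)
qed

lemma sq_dist_step_integrable:
  assumes "x \<in> Q"
  shows "integrable D (\<lambda>\<xi>. (norm (x - a *\<^sub>R g x \<xi> - xstar))\<^sup>2)"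
  unfolding sq_norm_step_expand using g_int sq_norm_g_integrable assms by simp

lemma expected_sq_dist_step_le:
  assumes x: "x \<in> Q" and a: "0 \<le> a"
  shows "(\<integral>\<xi>. (norm (x - a *\<^sub>R g x \<xi> - xstar))\<^sup>2 \<partial>D) + a * (2 - L1 * a) * (f_real x - fstar)
         \<le> (norm (x - xstar))\<^sup>2 + a\<^sup>2 * L0\<^sup>2"
proof -
  define G where "G = (\<integral>\<xi>. g x \<xi> \<partial>D)"
  have "(\<integral>\<xi>. (norm (x - a *\<^sub>R g x \<xi> - xstar))\<^sup>2 \<partial>D)
      = (norm (x - xstar))\<^sup>2 - 2 * a * (G \<bullet> (x - xstar)) + a\<^sup>2 * (\<integral>\<xi>. (norm (g x \<xi>))\<^sup>2 \<partial>D)"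
    unfolding sq_norm_step_expand G_def using g_int sq_norm_g_integrable[OF x] x by (simp add: D.prob_space)
  moreover have "f x + ereal (G \<bullet> (xstar - x)) \<le> f xstar"
    using g_subgrad x unfolding subdiff_def G_def by blast
  then have "f_real x - fstar \<le> G \<bullet> (x - xstar)"
    using f_eq_f_real[OF x] fstar by (simp add: inner_diff_right)
  then have "2 * a * (f_real x - fstar) \<le> 2 * a * (G \<bullet> (x - xstar))"
    using a by (intro mult_left_mono) auto
  moreover have "a\<^sup>2 * (\<integral>\<xi>. (norm (g x \<xi>))\<^sup>2 \<partial>D) \<le> a\<^sup>2 * (L0\<^sup>2 + L1 * (f_real x - fstar))"
    using expected_sq_norm_g_le[OF x] by (intro mult_left_mono) auto
  ultimately show ?thesis
    by (simp add: algebra_simps power2_eq_square)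
qed

lemma expected_sq_dist_proj_step_le:
  assumes x: "x \<in> Q" and a: "0 \<le> a" "L1 * a \<le> 2"
  shows "(\<integral>\<^sup>+\<xi>. ennreal ((norm (closest_point Q (x - a *\<^sub>R g x \<xi>) - xstar))\<^sup>2)
             + ennreal (a * (2 - L1 * a) * (f_real x - fstar)) \<partial>D)
         \<le> ennreal ((norm (x - xstar))\<^sup>2 + a\<^sup>2 * L0\<^sup>2)"
proof -
  define c where "c = a * (2 - L1 * a) * (f_real x - fstar)"
  have c: "0 \<le> c"
    using a fstar_le_f_real[OF x] by (simp add: c_def)
  have "(\<integral>\<^sup>+\<xi>. ennreal ((norm (closest_point Q (x - a *\<^sub>R g x \<xi>) - xstar))\<^sup>2) + ennreal c \<partial>D)
      \<le> (\<integral>\<^sup>+\<xi>. ennreal ((norm (x - a *\<^sub>R g x \<xi> - xstar))\<^sup>2 + c) \<partial>D)"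
  proof (rule nn_integral_mono)
    fix \<xi>
    have "norm (closest_point Q (x - a *\<^sub>R g x \<xi>) - xstar) \<le> norm (x - a *\<^sub>R g x \<xi> - xstar)"
      by (rule norm_closest_point_diff_le[OF Q_closed Q_convex xstar_Q])
    then show "ennreal ((norm (closest_point Q (x - a *\<^sub>R g x \<xi>) - xstar))\<^sup>2) + ennreal c
        \<le> ennreal ((norm (x - a *\<^sub>R g x \<xi> - xstar))\<^sup>2 + c)"
      using c by (simp add: ennreal_plus[symmetric] power_mono del: ennreal_plus)
  qed
  also have "\<dots> = ennreal ((\<integral>\<xi>. (norm (x - a *\<^sub>R g x \<xi> - xstar))\<^sup>2 \<partial>D) + c)"
    using sq_dist_step_integrable[OF x] c
    by (subst nn_integral_eq_integral) (auto simp: D.prob_space)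
  also have "\<dots> \<le> ennreal ((norm (x - xstar))\<^sup>2 + a\<^sup>2 * L0\<^sup>2)"
    using expected_sq_dist_step_le[OF x a(1)] by (intro ennreal_leI) (simp add: c_def)
  finally show ?thesis
    by (simp add: c_def)
qed

lemma product_prob_space_const: "product_prob_space (\<lambda>_::'i. D)"
  by (simp add: product_prob_space_def product_prob_space_axioms_def product_sigma_finite_def
      D.sigma_finite_measure_axioms D.prob_space_axioms)

lemma expected_sq_dist_descent:
  fixes \<alpha> :: "nat \<Rightarrow> real" and T k :: nat
  defines "P \<equiv> PiM {..T} (\<lambda>_. D)" and "it \<equiv> sgd_iter Q g \<alpha> x0"
  assumes k: "k \<le> T" and a: "0 \<le> \<alpha> k" "L1 * \<alpha> k \<le> 2"
  shows "(\<integral>\<^sup>+\<xi>. ennreal ((norm (it \<xi> (Suc k) - xstar))\<^sup>2) \<partial>P)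
       + (\<integral>\<^sup>+\<xi>. ennreal (\<alpha> k * (2 - L1 * \<alpha> k) * (f_real (it \<xi> k) - fstar)) \<partial>P)
       \<le> (\<integral>\<^sup>+\<xi>. ennreal ((norm (it \<xi> k - xstar))\<^sup>2) \<partial>P) + ennreal ((\<alpha> k)\<^sup>2 * L0\<^sup>2)"
proof -
  interpret PS: product_prob_space "\<lambda>_::nat. D" "{..T}"
    using product_prob_space_const by (simp add: product_prob_space_def)
  define I where "I = {..T} - {k}"
  have I: "finite I" "k \<notin> I" and P_split: "P = PiM (insert k I) (\<lambda>_. D)"
    using k by (auto simp: I_def P_def insert_absorb)
  have [measurable]: "(\<lambda>\<xi>. it \<xi> j) \<in> borel_measurable P" if "j \<le> Suc k" for j
    using that k unfolding P_def it_def
    by (intro sgd_iter_measurable[OF Q_closed Q_convex Q_nonempty g_meas]) auto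
  have it_upd: "it (\<xi>(k := y)) k = it \<xi> k" for \<xi> y
    unfolding it_def by (rule sgd_iter_cong) simp
  have it_upd_Suc: "it (\<xi>(k := y)) (Suc k) = closest_point Q (it \<xi> k - \<alpha> k *\<^sub>R g (it \<xi> k) y)" for \<xi> y
    using it_upd[unfolded it_def] unfolding it_def by simp
  txt \<open>The iterate x_k depends only on the samples before k, so integrating out the k-th
    coordinate first is the conditional expectation over the fresh sample.\<close>
  have "(\<integral>\<^sup>+\<xi>. ennreal ((norm (it \<xi> (Suc k) - xstar))\<^sup>2) \<partial>P)
       + (\<integral>\<^sup>+\<xi>. ennreal (\<alpha> k * (2 - L1 * \<alpha> k) * (f_real (it \<xi> k) - fstar)) \<partial>P)
      = (\<integral>\<^sup>+\<xi>. ennreal ((norm (it \<xi> (Suc k) - xstar))\<^sup>2)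
              + ennreal (\<alpha> k * (2 - L1 * \<alpha> k) * (f_real (it \<xi> k) - fstar)) \<partial>P)"
    by (rule nn_integral_add[symmetric]) auto
  also have "\<dots> = (\<integral>\<^sup>+\<xi>. \<integral>\<^sup>+y. ennreal ((norm (closest_point Q (it \<xi> k - \<alpha> k *\<^sub>R g (it \<xi> k) y) - xstar))\<^sup>2)
              + ennreal (\<alpha> k * (2 - L1 * \<alpha> k) * (f_real (it \<xi> k) - fstar)) \<partial>D \<partial>PiM I (\<lambda>_. D))"
    using PS.product_nn_integral_insert[OF I, of "\<lambda>\<xi>. ennreal ((norm (it \<xi> (Suc k) - xstar))\<^sup>2)
              + ennreal (\<alpha> k * (2 - L1 * \<alpha> k) * (f_real (it \<xi> k) - fstar))"]
    unfolding P_split[symmetric] it_upd it_upd_Suc by simp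
  also have "\<dots> \<le> (\<integral>\<^sup>+\<xi>. ennreal ((norm (it \<xi> k - xstar))\<^sup>2 + (\<alpha> k)\<^sup>2 * L0\<^sup>2) \<partial>PiM I (\<lambda>_. D))"
    unfolding it_def
    by (intro nn_integral_mono expected_sq_dist_proj_step_le[OF sgd_iter_in_Q a])
  also have "\<dots> = (\<integral>\<^sup>+\<xi>. ennreal ((norm (it \<xi> k - xstar))\<^sup>2 + (\<alpha> k)\<^sup>2 * L0\<^sup>2) \<partial>P)"
    using PS.product_nn_integral_insert[OF I, of "\<lambda>\<xi>. ennreal ((norm (it \<xi> k - xstar))\<^sup>2 + (\<alpha> k)\<^sup>2 * L0\<^sup>2)"]
    unfolding P_split[symmetric] it_upd by (simp add: D.emeasure_space_1)
  also have "\<dots> = (\<integral>\<^sup>+\<xi>. ennreal ((norm (it \<xi> k - xstar))\<^sup>2) + ennreal ((\<alpha> k)\<^sup>2 * L0\<^sup>2) \<partial>P)"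
    by (intro nn_integral_cong ennreal_plus) auto
  also have "\<dots> = (\<integral>\<^sup>+\<xi>. ennreal ((norm (it \<xi> k - xstar))\<^sup>2) \<partial>P) + ennreal ((\<alpha> k)\<^sup>2 * L0\<^sup>2)"
    using PS.P.emeasure_space_1 by (subst nn_integral_add) (auto simp: P_def[symmetric])
  finally show ?thesis .
qed

lemma sum_expected_weighted_gap_le:
  fixes \<alpha> :: "nat \<Rightarrow> real" and T :: nat
  defines "P \<equiv> PiM {..T} (\<lambda>_. D)" and "it \<equiv> sgd_iter Q g \<alpha> x0"
  assumes a: "\<And>k. 0 \<le> \<alpha> k" "\<And>k. L1 * \<alpha> k \<le> 2"
  shows "(\<Sum>k\<le>T. \<integral>\<^sup>+\<xi>. ennreal (\<alpha> k * (2 - L1 * \<alpha> k) * (f_real (it \<xi> k) - fstar)) \<partial>P)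
         \<le> ennreal ((norm (x0 - xstar))\<^sup>2 + L0\<^sup>2 * (\<Sum>k\<le>T. (\<alpha> k)\<^sup>2))"
proof -
  interpret PS: product_prob_space "\<lambda>_::nat. D" "{..T}"
    using product_prob_space_const by (simp add: product_prob_space_def)
  define V where "V j = (\<integral>\<^sup>+\<xi>. ennreal ((norm (it \<xi> j - xstar))\<^sup>2) \<partial>P)" for j
  define F where "F j = (\<integral>\<^sup>+\<xi>. ennreal (\<alpha> j * (2 - L1 * \<alpha> j) * (f_real (it \<xi> j) - fstar)) \<partial>P)" for j
  have "(\<Sum>k\<le>T. F k) \<le> V (Suc T) + (\<Sum>k<Suc T. F k)"
    by (simp add: lessThan_Suc_atMost)
  also have "\<dots> \<le> V 0 + (\<Sum>k<Suc T. ennreal ((\<alpha> k)\<^sup>2 * L0\<^sup>2))"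
    using expected_sq_dist_descent a unfolding V_def F_def P_def it_def
    by (intro telescoping_sum_le) (simp add: less_Suc_eq_le)
  also have "\<dots> = ennreal ((norm (x0 - xstar))\<^sup>2) + ennreal (L0\<^sup>2 * (\<Sum>k\<le>T. (\<alpha> k)\<^sup>2))"
    by (simp add: V_def it_def P_def PS.P.emeasure_space_1 lessThan_Suc_atMost sum_ennreal
        sum_distrib_left mult.commute)
  also have "\<dots> = ennreal ((norm (x0 - xstar))\<^sup>2 + L0\<^sup>2 * (\<Sum>k\<le>T. (\<alpha> k)\<^sup>2))"
    by (rule ennreal_plus[symmetric]) (auto intro!: mult_nonneg_nonneg sum_nonneg)
  finally show ?thesis
    by (simp add: F_def)
qed

lemma f_real_weighted_average_le:
  fixes c :: "'i \<Rightarrow> real" and y :: "'i \<Rightarrow> 'a"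
  assumes I: "finite I" and y: "\<And>i. i \<in> I \<Longrightarrow> y i \<in> Q" and c: "\<And>i. i \<in> I \<Longrightarrow> 0 \<le> c i"
    and W: "0 < (\<Sum>i\<in>I. c i)"
  shows "(\<Sum>i\<in>I. c i *\<^sub>R y i) /\<^sub>R (\<Sum>i\<in>I. c i) \<in> Q"
    and "f_real ((\<Sum>i\<in>I. c i *\<^sub>R y i) /\<^sub>R (\<Sum>i\<in>I. c i))
         \<le> (\<Sum>i\<in>I. c i * f_real (y i)) / (\<Sum>i\<in>I. c i)"
proof -
  define w where "w i = c i / (\<Sum>i\<in>I. c i)" for i
  have w: "0 \<le> w i" if "i \<in> I" for i
    using c[OF that] W by (simp add: w_def)
  have w1: "(\<Sum>i\<in>I. w i) = 1"
    using W by (simp add: w_def sum_divide_distrib[symmetric])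
  have avg: "(\<Sum>i\<in>I. c i *\<^sub>R y i) /\<^sub>R (\<Sum>i\<in>I. c i) = (\<Sum>i\<in>I. w i *\<^sub>R y i)"
    by (simp add: w_def scaleR_sum_right divide_inverse_commute)
  have "I \<noteq> {}"
    using W by auto
  show "(\<Sum>i\<in>I. c i *\<^sub>R y i) /\<^sub>R (\<Sum>i\<in>I. c i) \<in> Q"
    unfolding avg using I Q_convex w1 w y by (rule convex_sum)
  show "f_real ((\<Sum>i\<in>I. c i *\<^sub>R y i) /\<^sub>R (\<Sum>i\<in>I. c i))
         \<le> (\<Sum>i\<in>I. c i * f_real (y i)) / (\<Sum>i\<in>I. c i)"
    unfolding avg using convex_on_sum[OF I \<open>I \<noteq> {}\<close> f_real_convex w1 w y]
    by (simp add: w_def sum_divide_distrib)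
qed

lemma gap_weighted_average_le:
  fixes c :: "'i \<Rightarrow> real" and y :: "'i \<Rightarrow> 'a"
  assumes I: "finite I" and y: "\<And>i. i \<in> I \<Longrightarrow> y i \<in> Q" and c: "\<And>i. i \<in> I \<Longrightarrow> 0 \<le> c i"
    and W: "0 < (\<Sum>i\<in>I. c i)"
  shows "e2ennreal (f ((\<Sum>i\<in>I. c i *\<^sub>R y i) /\<^sub>R (\<Sum>i\<in>I. c i)) - ereal fstar)
         \<le> ennreal (1 / (\<Sum>i\<in>I. c i)) * (\<Sum>i\<in>I. ennreal (c i * (f_real (y i) - fstar)))"
proof -
  define W where "W = (\<Sum>i\<in>I. c i)"
  define avg where "avg = (\<Sum>i\<in>I. c i *\<^sub>R y i) /\<^sub>R W"
  have gap_nonneg: "0 \<le> c i * (f_real (y i) - fstar)" if "i \<in> I" for i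
    using c[OF that] fstar_le_f_real[OF y[OF that]] by simp
  have avg_Q: "avg \<in> Q" and jensen: "f_real avg \<le> (\<Sum>i\<in>I. c i * f_real (y i)) / W"
    using f_real_weighted_average_le[of I y c] I y c W unfolding avg_def W_def by auto
  have "(\<Sum>i\<in>I. c i * (f_real (y i) - fstar)) = (\<Sum>i\<in>I. c i * f_real (y i)) - fstar * W"
    by (simp add: W_def right_diff_distrib sum_subtractf sum_distrib_left mult.commute)
  then have "f_real avg - fstar \<le> 1 / W * (\<Sum>i\<in>I. c i * (f_real (y i) - fstar))"
    using jensen W by (simp add: W_def field_simps)
  then have "ennreal (f_real avg - fstar) \<le> ennreal (1 / W) * ennreal (\<Sum>i\<in>I. c i * (f_real (y i) - fstar))"
    using W gap_nonneg by (subst ennreal_mult[symmetric]) (auto simp: W_def intro: ennreal_leI sum_nonneg)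
  then show ?thesis
    using gap_nonneg f_eq_f_real[OF avg_Q] by (simp add: sum_ennreal W_def avg_def)
qed

lemma expected_gap_weighted_average_le:
  fixes \<alpha> :: "nat \<Rightarrow> real" and T :: nat
  defines "P \<equiv> PiM {..T} (\<lambda>_. D)" and "it \<equiv> sgd_iter Q g \<alpha> x0"
  assumes a: "\<And>k. 0 < \<alpha> k" "\<And>k. L1 * \<alpha> k < 2"
  shows "(\<integral>\<^sup>+\<xi>. e2ennreal
            (f ((\<Sum>k\<le>T. (\<alpha> k * (2 - L1 * \<alpha> k)) *\<^sub>R it \<xi> k) /\<^sub>R (\<Sum>k\<le>T. \<alpha> k * (2 - L1 * \<alpha> k)))
             - ereal fstar) \<partial>P)
         \<le> ennreal (((norm (x0 - xstar))\<^sup>2 + L0\<^sup>2 * (\<Sum>k\<le>T. (\<alpha> k)\<^sup>2))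
                    / (\<Sum>k\<le>T. \<alpha> k * (2 - L1 * \<alpha> k)))"
proof -
  define c where "c k = \<alpha> k * (2 - L1 * \<alpha> k)" for k
  define W where "W = (\<Sum>k\<le>T. c k)"
  have c: "0 < c k" for k
    using a[of k] by (simp add: c_def)
  have W: "0 < W"
    unfolding W_def using c by (intro sum_pos) auto
  have pointwise: "e2ennreal (f ((\<Sum>k\<le>T. c k *\<^sub>R it \<xi> k) /\<^sub>R W) - ereal fstar)
      \<le> ennreal (1 / W) * (\<Sum>k\<le>T. ennreal (c k * (f_real (it \<xi> k) - fstar)))" for \<xi>
    unfolding W_def it_def using c W[unfolded W_def]
    by (intro gap_weighted_average_le) (auto simp: sgd_iter_in_Q less_imp_le)
  have [measurable]: "(\<lambda>\<xi>. it \<xi> k) \<in> borel_measurable P" if "k \<in> {..T}" for k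
    using that unfolding P_def it_def by (intro sgd_iter_measurable_PiM) simp
  have "(\<integral>\<^sup>+\<xi>. e2ennreal (f ((\<Sum>k\<le>T. c k *\<^sub>R it \<xi> k) /\<^sub>R W) - ereal fstar) \<partial>P)
      \<le> (\<integral>\<^sup>+\<xi>. ennreal (1 / W) * (\<Sum>k\<le>T. ennreal (c k * (f_real (it \<xi> k) - fstar))) \<partial>P)"
    by (intro nn_integral_mono pointwise)
  also have "\<dots> = ennreal (1 / W) * (\<Sum>k\<le>T. \<integral>\<^sup>+\<xi>. ennreal (c k * (f_real (it \<xi> k) - fstar)) \<partial>P)"
    by (simp add: nn_integral_cmult nn_integral_sum)
  also have "\<dots> \<le> ennreal (1 / W) * ennreal ((norm (x0 - xstar))\<^sup>2 + L0\<^sup>2 * (\<Sum>k\<le>T. (\<alpha> k)\<^sup>2))"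
    using sum_expected_weighted_gap_le[of \<alpha> T] a
    by (intro mult_left_mono) (auto simp: c_def P_def it_def less_imp_le)
  also have "\<dots> = ennreal (((norm (x0 - xstar))\<^sup>2 + L0\<^sup>2 * (\<Sum>k\<le>T. (\<alpha> k)\<^sup>2)) / W)"
    using W by (subst ennreal_mult[symmetric]) (auto intro!: add_nonneg_nonneg mult_nonneg_nonneg sum_nonneg)
  finally show ?thesis
    by (simp add: c_def W_def)
qed

lemma expected_gap_average_constant_step_le:
  fixes T :: nat
  defines "a \<equiv> norm (x0 - xstar) / (L0 * sqrt (real T + 1))"
  assumes L0: "0 < L0" and aL: "L1 * a < 2"
  shows "(\<integral>\<^sup>+\<xi>. e2ennreal
            (f ((\<Sum>k\<le>T. sgd_iter Q g (\<lambda>_. a) x0 \<xi> k) /\<^sub>R (real T + 1)) - ereal fstar)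
           \<partial>PiM {..T} (\<lambda>_. D))
         \<le> ennreal (L0 * norm (x0 - xstar) / sqrt (real T + 1) * (2 / (2 - L1 * a)))"
proof (cases "x0 = xstar")
  case True
  then have "sgd_iter Q g (\<lambda>_. a) x0 \<xi> k = x0" for \<xi> k
    by (induction k) (simp_all add: a_def closest_point_self[OF xstar_Q])
  then have "(\<Sum>k\<le>T. sgd_iter Q g (\<lambda>_. a) x0 \<xi> k) /\<^sub>R (real T + 1) = xstar" for \<xi>
    using True by (simp add: sum_constant_scaleR add.commute)
  then show ?thesis
    using fstar by (simp add: zero_ereal_def[symmetric])
next
  case False
  define R where "R = norm (x0 - xstar)"
  define s where "s = sqrt (real T + 1)"
  have s: "0 < s" "s\<^sup>2 = real T + 1"
    by (simp_all add: s_def)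
  have a_pos: "0 < a" and R_eq: "R = a * L0 * s"
    using False L0 s by (simp_all add: a_def R_def s_def)
  define c where "c = a * (2 - L1 * a)"
  have c: "0 < c"
    using a_pos aL by (simp add: c_def)
  have avg: "(\<Sum>k\<le>T. c *\<^sub>R sgd_iter Q g (\<lambda>_. a) x0 \<xi> k) /\<^sub>R (\<Sum>k\<le>T. c)
      = (\<Sum>k\<le>T. sgd_iter Q g (\<lambda>_. a) x0 \<xi> k) /\<^sub>R (real T + 1)" for \<xi>
    using c by (simp add: scaleR_sum_right[symmetric] add.commute)
  have bound: "(R\<^sup>2 + L0\<^sup>2 * (\<Sum>k\<le>T. a\<^sup>2)) / (\<Sum>k\<le>T. c) = L0 * R / s * (2 / (2 - L1 * a))"
  proof -
    have "(R\<^sup>2 + L0\<^sup>2 * (\<Sum>k\<le>T. a\<^sup>2)) / (\<Sum>k\<le>T. c) = (R\<^sup>2 + L0\<^sup>2 * (s\<^sup>2 * a\<^sup>2)) / (s\<^sup>2 * c)"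
      by (simp add: s(2) add.commute)
    also have "\<dots> = L0 * R / s * (2 / (2 - L1 * a))"
      using s(1) a_pos aL L0 unfolding R_eq c_def by (simp add: field_simps power2_eq_square)
    finally show ?thesis .
  qed
  show ?thesis
    using expected_gap_weighted_average_le[of "\<lambda>_. a" T] a_pos aL
    unfolding avg[unfolded c_def] bound[unfolded c_def R_def s_def]
    by simp
qed

end

theorem theorem1p6:
  fixes f :: "'a::euclidean_space \<Rightarrow> ereal"
    and Q :: "'a set"
    and D :: "'b measure"
    and g :: "'a \<Rightarrow> 'b \<Rightarrow> 'a"
    and L0 L1 fstar :: real
    and xstar x0 :: 'a
  assumes proper: "\<forall>x. f x \<noteq> -\<infinity>"
    and lsc: "lsc_ereal f"
    and cvx: "convex_ereal f"
    and Q_ne: "Q \<noteq> {}" and Q_closed: "closed Q" and Q_convex: "convex Q"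
    and Q_dom: "Q \<subseteq> edom f"
    and xstar_Q: "xstar \<in> Q"
    and xstar_min: "\<forall>y\<in>Q. f xstar \<le> f y"
    and fstar: "f xstar = ereal fstar"
    and x0_Q: "x0 \<in> Q"
    and D_prob: "prob_space D"
    and g_meas: "(\<lambda>(x, \<xi>). g x \<xi>) \<in> borel_measurable (borel \<Otimes>\<^sub>M D)"
    and g_int: "\<forall>x\<in>Q. integrable D (g x)"
    and g_subgrad: "\<forall>x\<in>Q. (\<integral>\<xi>. g x \<xi> \<partial>D) \<in> subdiff f x"
    and L0_nn: "L0 \<ge> 0" and L1_nn: "L1 \<ge> 0"
    and g_growth: "\<forall>x\<in>Q. (\<integral>\<^sup>+\<xi>. ennreal ((norm (g x \<xi>))\<^sup>2) \<partial>D)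
                         \<le> ennreal (L0\<^sup>2 + L1 * (real_of_ereal (f x) - fstar))"
  shows
    "(\<forall>\<alpha> :: nat \<Rightarrow> real. (\<forall>k. 0 < \<alpha> k) \<and> (\<forall>k. L1 * \<alpha> k < 2) \<longrightarrow>
       (\<forall>T::nat.
          (\<integral>\<^sup>+\<xi>. e2ennreal
              (f ((\<Sum>k\<le>T. (\<alpha> k * (2 - L1 * \<alpha> k)) *\<^sub>R sgd_iter Q g \<alpha> x0 \<xi> k)
                    /\<^sub>R (\<Sum>k\<le>T. \<alpha> k * (2 - L1 * \<alpha> k))) - ereal fstar)
            \<partial>(PiM {..T} (\<lambda>_. D)))
          \<le> ennreal (((norm (x0 - xstar))\<^sup>2 + L0\<^sup>2 * (\<Sum>k\<le>T. (\<alpha> k)\<^sup>2))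
                     / (\<Sum>k\<le>T. \<alpha> k * (2 - L1 * \<alpha> k))))) \<and>
     (\<forall>T::nat. L0 > 0 \<and> L1 * (norm (x0 - xstar) / (L0 * sqrt (real T + 1))) < 2 \<longrightarrow>
        (let a = norm (x0 - xstar) / (L0 * sqrt (real T + 1)) in
          (\<integral>\<^sup>+\<xi>. e2ennreal
              (f ((\<Sum>k\<le>T. sgd_iter Q g (\<lambda>_. a) x0 \<xi> k) /\<^sub>R (real T + 1)) - ereal fstar)
            \<partial>(PiM {..T} (\<lambda>_. D)))
          \<le> ennreal (L0 * norm (x0 - xstar) / sqrt (real T + 1) * (2 / (2 - L1 * a)))))"
proof -
  interpret stochastic_subgradient_setting f Q D g L0 L1 fstar xstar x0
    unfolding stochastic_subgradient_setting_def using assms by blast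
  show ?thesis
    using expected_gap_weighted_average_le expected_gap_average_constant_step_le
    by (auto simp: Let_def)
qed

end
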